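(* Let $n\in\mathbb{N}_0$. The range of the operator $I+RM+MR$ on $\mathbb{P}^\perp_{n,n-1}(\widehat T)$ is exactly $\{p\in\mathbb{P}^\perp_{n,n-1}(\widehat T): RMp=p\}$.
   Context: $\widehat T$ is the triangle with vertices $(0,0),(1,0),(0,1)$; $\mathbb{P}^\perp_{0,-1}(\widehat T)=\mathbb{P}_0$ and for $n\ge1$, $\mathbb{P}^\perp_{n,n-1}(\widehat T)$ is the space of polynomials of total degree $\le n$ that are $L^2(\widehat T)$-orthogonal to all polynomials of degree $\le n-1$. The linear maps $M,R$ are $Mp(x_1,x_2):=p(1-x_1-x_2,x_2)$ and $Rp(x_1,x_2):=p(x_2,x_1)$; both are automorphisms of $\mathbb{P}^\perp_{n,n-1}(\widehat T)$, and $RM$, $MR$ denote operator compositions. *)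

theory Defs
  imports "HOL-Analysis.Analysis"
begin

definition poly_deg_le :: "nat \<Rightarrow> (real \<times> real \<Rightarrow> real) \<Rightarrow> bool" where
  "poly_deg_le n p \<longleftrightarrow> (\<exists>c :: nat \<Rightarrow> nat \<Rightarrow> real.
      p = (\<lambda>(x, y). \<Sum>i\<le>n. \<Sum>j\<le>n - i. c i j * x ^ i * y ^ j))"

definition ref_tri :: "(real \<times> real) set" where
  "ref_tri = {(x, y). 0 \<le> x \<and> 0 \<le> y \<and> x + y \<le> 1}"

definition Pperp :: "nat \<Rightarrow> (real \<times> real \<Rightarrow> real) set" where
  "Pperp n = {p. poly_deg_le n p \<and>
     (n \<ge> 1 \<longrightarrow> (\<forall>q. poly_deg_le (n - 1) q \<longrightarrow> integral ref_tri (\<lambda>z. p z * q z) = 0))}"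

definition Mop :: "(real \<times> real \<Rightarrow> real) \<Rightarrow> (real \<times> real \<Rightarrow> real)" where
  "Mop p = (\<lambda>(x, y). p (1 - x - y, y))"

definition Rop :: "(real \<times> real \<Rightarrow> real) \<Rightarrow> (real \<times> real \<Rightarrow> real)" where
  "Rop p = (\<lambda>(x, y). p (y, x))"

end

theory Submission
  imports Defs
begin

text \<open>Both \<open>M\<close> and \<open>R\<close> are compositions with affine involutions of \<open>\<real>\<^sup>2\<close> that map the
  reference triangle onto itself, preserve Lebesgue measure and preserve total degree,
  hence they map \<open>Pperp n\<close> into itself. Moreover \<open>T = RM\<close> satisfies \<open>T\<^sup>3 = I\<close> with \<open>T\<^sup>2 = MR\<close>, so \<open>I + RM + MR\<close> maps
  into the fixed space of \<open>T\<close> and acts there as multiplication by 3.\<close>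

lemma integrable_on_compact_continuous:
  fixes f :: "'a::euclidean_space \<Rightarrow> 'b::euclidean_space"
  assumes "compact S" "continuous_on S f"
  shows "f integrable_on S"
  using borel_integrable_compact[OF assms]
  by (intro set_borel_integral_eq_integral(1)) (simp add: set_integrable_def)

lemma integral_compose_measure_preserving:
  fixes \<phi> :: "'a::euclidean_space \<Rightarrow> 'a" and g :: "'a \<Rightarrow> 'b::euclidean_space"
  assumes preserving: "distr lborel lborel \<phi> = lborel"
    and cont_\<phi>: "continuous_on UNIV \<phi>" and cont_g: "continuous_on UNIV g"
    and "compact S" and invariant: "\<And>z. \<phi> z \<in> S \<longleftrightarrow> z \<in> S"
  shows "integral S (\<lambda>z. g (\<phi> z)) = integral S g"
proof -
  have [measurable]: "\<phi> \<in> borel_measurable borel" "g \<in> borel_measurable borel" "S \<in> sets borel"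
    using cont_\<phi> cont_g \<open>compact S\<close>
    by (auto intro: borel_measurable_continuous_onI simp: borel_compact)
  have integrable: "set_integrable lborel S f" if "continuous_on UNIV f" for f :: "'a \<Rightarrow> 'b"
    unfolding set_integrable_def
    by (rule borel_integrable_compact[OF \<open>compact S\<close> continuous_on_subset[OF that]]) auto
  have "integral S (\<lambda>z. g (\<phi> z)) = (\<integral>z. indicator S (\<phi> z) *\<^sub>R g (\<phi> z) \<partial>lborel)"
    using set_borel_integral_eq_integral(2)[OF integrable[OF continuous_on_compose2[OF cont_g cont_\<phi>]]]
    by (simp add: set_lebesgue_integral_def invariant indicator_def)
  also have "\<dots> = (\<integral>w. indicator S w *\<^sub>R g w \<partial>distr lborel lborel \<phi>)"
    by (rule integral_distr[symmetric]) auto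
  also have "\<dots> = integral S g"
    using set_borel_integral_eq_integral(2)[OF integrable[OF cont_g]]
    by (simp add: preserving set_lebesgue_integral_def)
  finally show ?thesis .
qed

definition Mmap :: "real \<times> real \<Rightarrow> real \<times> real" where
  "Mmap z = (1 - fst z - snd z, snd z)"

lemma Mmap_measurable [measurable]: "Mmap \<in> borel_measurable borel"
  unfolding Mmap_def by (intro borel_measurable_continuous_onI continuous_intros)

lemma lborel_distr_Mmap: "distr lborel lborel Mmap = lborel"
proof (rule measure_eqI)
  show "sets (distr lborel lborel Mmap) = sets (lborel :: (real \<times> real) measure)" by simp
next
  fix A :: "(real \<times> real) set" assume "A \<in> sets (distr lborel lborel Mmap)"
  then have A [measurable]: "A \<in> sets borel" by simp
  have [measurable]: "(\<lambda>z. indicator A z :: ennreal) \<in> borel_measurable (lborel \<Otimes>\<^sub>M lborel)"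
    by (simp add: lborel_prod)
  have "emeasure (distr lborel lborel Mmap) A = (\<integral>\<^sup>+z. indicator (Mmap -` A) z \<partial>lborel)"
    using measurable_sets[OF Mmap_measurable A] by (simp add: emeasure_distr)
  also have "\<dots> = (\<integral>\<^sup>+z. indicator A (Mmap z) \<partial>(lborel \<Otimes>\<^sub>M lborel))"
    by (simp add: indicator_vimage lborel_prod)
  also have "\<dots> = (\<integral>\<^sup>+y. \<integral>\<^sup>+x. indicator A (1 - x - y, y) \<partial>lborel \<partial>lborel)"
    by (subst lborel_pair.nn_integral_snd[symmetric]) (auto simp: Mmap_def)
  also have "\<dots> = (\<integral>\<^sup>+y. \<integral>\<^sup>+x. indicator A (x, y) \<partial>lborel \<partial>lborel)"
  proof (rule nn_integral_cong)
    fix y :: real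
    have "(\<lambda>x. indicator A (x, y) :: ennreal) \<in> borel_measurable borel"
      by measurable
    from nn_integral_real_affine[OF this, of "-1" "1 - y"]
    show "(\<integral>\<^sup>+x. indicator A (1 - x - y, y) \<partial>lborel) = (\<integral>\<^sup>+x. indicator A (x, y) \<partial>lborel)"
      by (simp add: algebra_simps)
  qed
  also have "\<dots> = (\<integral>\<^sup>+z. indicator A z \<partial>(lborel \<Otimes>\<^sub>M lborel))"
    by (subst lborel_pair.nn_integral_snd[symmetric]) auto
  also have "\<dots> = emeasure lborel A"
    by (simp add: lborel_prod)
  finally show "emeasure (distr lborel lborel Mmap) A = emeasure lborel A" .
qed

lemma lborel_distr_swap: "distr lborel lborel prod.swap = (lborel :: (real \<times> real) measure)"
proof -
  have "distr (lborel \<Otimes>\<^sub>M lborel) (lborel \<Otimes>\<^sub>M lborel) (\<lambda>(x, y). (y, x))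
        = (lborel \<Otimes>\<^sub>M lborel :: (real \<times> real) measure)"
    using lborel_pair.distr_pair_swap[symmetric] by simp
  then show ?thesis
    by (metis (no_types, lifting) distr_cong lborel_prod prod.swap_def case_prod_beta')
qed

lemma compact_ref_tri: "compact ref_tri"
  unfolding compact_eq_bounded_closed
proof
  show "bounded ref_tri"
    by (rule bounded_subset[OF bounded_cbox[of "(0,0)" "(1,1)"]])
       (auto simp: ref_tri_def cbox_Pair_eq)
  have "ref_tri = {z. 0 \<le> fst z} \<inter> {z. 0 \<le> snd z} \<inter> {z. fst z + snd z \<le> 1}"
    by (auto simp: ref_tri_def)
  also have "closed \<dots>"
    by (intro closed_Int closed_Collect_le continuous_intros)
  finally show "closed ref_tri" .
qed

definition tri :: "nat \<Rightarrow> (nat \<times> nat) set" where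
  "tri n = {(i, j). i + j \<le> n}"

lemma tri_eq_Sigma: "tri n = Sigma {..n} (\<lambda>i. {..n - i})"
  by (auto simp: tri_def)

lemma finite_tri [simp]: "finite (tri n)"
  by (simp add: tri_eq_Sigma)

lemma poly_deg_le_iff_sum_tri: "poly_deg_le n p \<longleftrightarrow>
   (\<exists>c. p = (\<lambda>z. \<Sum>(i, j)\<in>tri n. c i j * fst z ^ i * snd z ^ j))"
proof -
  have "(\<lambda>(x, y). \<Sum>i\<le>n. \<Sum>j\<le>n - i. c i j * x ^ i * y ^ j)
        = (\<lambda>z. \<Sum>(i, j)\<in>tri n. c i j * fst z ^ i * snd z ^ j)" for c :: "nat \<Rightarrow> nat \<Rightarrow> real"
    by (rule ext) (simp add: tri_eq_Sigma sum.Sigma case_prod_beta)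
  then show ?thesis unfolding poly_deg_le_def by simp
qed

lemma poly_deg_le_zero: "poly_deg_le n (\<lambda>z. 0)"
  unfolding poly_deg_le_iff_sum_tri by (rule exI[of _ "\<lambda>i j. 0"]) simp

lemma poly_deg_le_add:
  assumes "poly_deg_le n p" "poly_deg_le n q"
  shows "poly_deg_le n (\<lambda>z. p z + q z)"
proof -
  obtain c d where c: "p = (\<lambda>z. \<Sum>(i, j)\<in>tri n. c i j * fst z ^ i * snd z ^ j)"
    and d: "q = (\<lambda>z. \<Sum>(i, j)\<in>tri n. d i j * fst z ^ i * snd z ^ j)"
    using assms unfolding poly_deg_le_iff_sum_tri by blast
  show ?thesis unfolding poly_deg_le_iff_sum_tri
    by (rule exI[of _ "\<lambda>i j. c i j + d i j"])
       (simp add: c d sum.distrib[symmetric] case_prod_beta algebra_simps)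
qed

lemma poly_deg_le_cmult:
  assumes "poly_deg_le n p"
  shows "poly_deg_le n (\<lambda>z. a * p z)"
proof -
  obtain c where c: "p = (\<lambda>z. \<Sum>(i, j)\<in>tri n. c i j * fst z ^ i * snd z ^ j)"
    using assms unfolding poly_deg_le_iff_sum_tri by blast
  show ?thesis unfolding poly_deg_le_iff_sum_tri
    by (rule exI[of _ "\<lambda>i j. a * c i j"])
       (simp add: c sum_distrib_left case_prod_beta algebra_simps)
qed

lemma poly_deg_le_sum:
  assumes "finite S" "\<And>s. s \<in> S \<Longrightarrow> poly_deg_le n (f s)"
  shows "poly_deg_le n (\<lambda>z. \<Sum>s\<in>S. f s z)"
  using assms by (induction S rule: finite_induct) (auto intro: poly_deg_le_zero poly_deg_le_add)

lemma poly_deg_le_mono: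
  assumes "poly_deg_le n p" "n \<le> m"
  shows "poly_deg_le m p"
proof -
  obtain c where c: "p = (\<lambda>z. \<Sum>(i, j)\<in>tri n. c i j * fst z ^ i * snd z ^ j)"
    using assms unfolding poly_deg_le_iff_sum_tri by blast
  let ?c = "\<lambda>i j. if i + j \<le> n then c i j else 0"
  have sub: "tri n \<subseteq> tri m" using assms(2) by (auto simp: tri_def)
  have "(\<Sum>(i, j)\<in>tri m. ?c i j * fst z ^ i * snd z ^ j)
           = (\<Sum>(i, j)\<in>tri n. ?c i j * fst z ^ i * snd z ^ j)" for z :: "real \<times> real"
    by (rule sum.mono_neutral_right[OF finite_tri sub]) (auto simp: tri_def split: if_splits)
  also have "\<dots> z = p z" for z
    unfolding c by (rule sum.cong) (auto simp: tri_def)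
  finally show ?thesis
    unfolding poly_deg_le_iff_sum_tri by (intro exI[of _ ?c]) auto
qed

lemma poly_deg_le_monomial: "poly_deg_le (i + j) (\<lambda>z. fst z ^ i * snd z ^ j)"
  unfolding poly_deg_le_iff_sum_tri
proof (intro exI[of _ "\<lambda>a b. if a = i \<and> b = j then 1 else 0"] ext)
  fix z :: "real \<times> real"
  have "(\<Sum>(a, b)\<in>tri (i + j). (if a = i \<and> b = j then 1 else 0) * fst z ^ a * snd z ^ b)
      = (\<Sum>w\<in>tri (i + j). if w = (i, j) then fst z ^ i * snd z ^ j else 0)"
    by (rule sum.cong) (auto split: if_splits)
  also have "\<dots> = fst z ^ i * snd z ^ j"
    by (subst sum.delta[OF finite_tri]) (simp add: tri_def)
  finally show "fst z ^ i * snd z ^ j =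
     (\<Sum>(a, b)\<in>tri (i + j). (if a = i \<and> b = j then 1 else 0) * fst z ^ a * snd z ^ b)" ..
qed

lemma poly_deg_le_const: "poly_deg_le n (\<lambda>z. a)"
  using poly_deg_le_mono[OF poly_deg_le_cmult[OF poly_deg_le_monomial[of 0 0]], of n a] by simp

lemma poly_deg_le_fst: "poly_deg_le 1 fst"
  using poly_deg_le_monomial[of 1 0] by simp

lemma poly_deg_le_snd: "poly_deg_le 1 snd"
  using poly_deg_le_monomial[of 0 1] by simp

lemma poly_deg_le_mult:
  assumes "poly_deg_le n p" "poly_deg_le m q"
  shows "poly_deg_le (n + m) (\<lambda>z. p z * q z)"
proof -
  obtain c where c: "p = (\<lambda>z. \<Sum>(i, j)\<in>tri n. c i j * fst z ^ i * snd z ^ j)"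
    using assms unfolding poly_deg_le_iff_sum_tri by blast
  obtain d where d: "q = (\<lambda>z. \<Sum>(k, l)\<in>tri m. d k l * fst z ^ k * snd z ^ l)"
    using assms unfolding poly_deg_le_iff_sum_tri by blast
  have eq: "(\<lambda>z. p z * q z) = (\<lambda>z. \<Sum>w\<in>tri n. \<Sum>v\<in>tri m.
      (c (fst w) (snd w) * d (fst v) (snd v)) * (fst z ^ (fst w + fst v) * snd z ^ (snd w + snd v)))"
    by (rule ext) (simp add: c d sum_product case_prod_beta power_add algebra_simps)
  show ?thesis unfolding eq
  proof (intro poly_deg_le_sum finite_tri poly_deg_le_cmult)
    fix w v assume "w \<in> tri n" "v \<in> tri m"
    then have "fst w + fst v + (snd w + snd v) \<le> n + m" by (auto simp: tri_def)
    then show "poly_deg_le (n + m) (\<lambda>z. fst z ^ (fst w + fst v) * snd z ^ (snd w + snd v))"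
      using poly_deg_le_mono[OF poly_deg_le_monomial] by blast
  qed
qed

lemma poly_deg_le_power:
  assumes "poly_deg_le 1 f"
  shows "poly_deg_le k (\<lambda>z. f z ^ k)"
proof (induction k)
  case 0 then show ?case using poly_deg_le_const[of 0 1] by simp
next
  case (Suc k) then show ?case using poly_deg_le_mult[OF assms Suc] by simp
qed

lemma poly_deg_le_compose_affine:
  assumes "poly_deg_le n p" "poly_deg_le 1 f" "poly_deg_le 1 g"
  shows "poly_deg_le n (\<lambda>z. p (f z, g z))"
proof -
  obtain c where c: "p = (\<lambda>z. \<Sum>(i, j)\<in>tri n. c i j * fst z ^ i * snd z ^ j)"
    using assms unfolding poly_deg_le_iff_sum_tri by blast
  have eq: "(\<lambda>z. p (f z, g z)) = (\<lambda>z. \<Sum>w\<in>tri n. c (fst w) (snd w) * (f z ^ fst w * g z ^ snd w))"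
    by (rule ext) (simp add: c case_prod_beta algebra_simps)
  show ?thesis unfolding eq
  proof (intro poly_deg_le_sum finite_tri poly_deg_le_cmult)
    fix w assume "w \<in> tri n"
    then have "fst w + snd w \<le> n" by (auto simp: tri_def)
    with poly_deg_le_mult[OF poly_deg_le_power[OF assms(2)] poly_deg_le_power[OF assms(3)]]
    show "poly_deg_le n (\<lambda>z. f z ^ fst w * g z ^ snd w)"
      using poly_deg_le_mono by blast
  qed
qed

lemma continuous_on_poly_deg_le:
  assumes "poly_deg_le n p"
  shows "continuous_on UNIV p"
proof -
  obtain c where "p = (\<lambda>z. \<Sum>w\<in>tri n. c (fst w) (snd w) * fst z ^ fst w * snd z ^ snd w)"
    using assms unfolding poly_deg_le_iff_sum_tri by (auto simp: case_prod_beta)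
  then show ?thesis by (simp only:) (intro continuous_intros)
qed

lemma integrable_on_ref_tri_poly:
  assumes "poly_deg_le n p"
  shows "p integrable_on ref_tri"
  by (intro integrable_on_compact_continuous compact_ref_tri
      continuous_on_subset[OF continuous_on_poly_deg_le[OF assms] subset_UNIV])

lemma Pperp_add:
  assumes "p \<in> Pperp n" "q \<in> Pperp n"
  shows "(\<lambda>z. p z + q z) \<in> Pperp n"
  unfolding Pperp_def
proof (intro CollectI conjI impI allI poly_deg_le_add)
  show deg: "poly_deg_le n p" "poly_deg_le n q" using assms by (auto simp: Pperp_def)
  fix r assume "1 \<le> n" "poly_deg_le (n - 1) r"
  then have "integral ref_tri (\<lambda>z. p z * r z) = 0" "integral ref_tri (\<lambda>z. q z * r z) = 0"
    using assms by (auto simp: Pperp_def)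
  moreover have "(\<lambda>z. p z * r z) integrable_on ref_tri" "(\<lambda>z. q z * r z) integrable_on ref_tri"
    using deg[THEN poly_deg_le_mult, OF \<open>poly_deg_le (n - 1) r\<close>]
    by (auto intro: integrable_on_ref_tri_poly)
  ultimately show "integral ref_tri (\<lambda>z. (p z + q z) * r z) = 0"
    by (simp add: distrib_right integral_add)
qed

lemma Pperp_cmult:
  assumes "p \<in> Pperp n"
  shows "(\<lambda>z. a * p z) \<in> Pperp n"
  unfolding Pperp_def
proof (intro CollectI conjI impI allI poly_deg_le_cmult)
  show "poly_deg_le n p" using assms by (auto simp: Pperp_def)
  fix r assume "1 \<le> n" "poly_deg_le (n - 1) r"
  then have "integral ref_tri (\<lambda>z. p z * r z) = 0"
    using assms by (auto simp: Pperp_def)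
  then show "integral ref_tri (\<lambda>z. a * p z * r z) = 0"
    using integral_mult_right[of ref_tri a "\<lambda>z. p z * r z"] by (simp add: mult.assoc)
qed

text \<open>For \<open>q\<close> of degree \<open>< n\<close> the substitution \<open>z \<mapsto> \<phi> z\<close> gives
  \<open>\<integral> (p \<circ> \<phi>) q = \<integral> p (q \<circ> \<phi>) = 0\<close>, since \<open>q \<circ> \<phi>\<close> again has degree \<open>< n\<close>.\<close>

lemma Pperp_compose_affine_involution:
  assumes preserving: "distr lborel lborel \<phi> = lborel"
    and involution: "\<And>z. \<phi> (\<phi> z) = z"
    and invariant: "\<And>z. \<phi> z \<in> ref_tri \<longleftrightarrow> z \<in> ref_tri"
    and affine: "poly_deg_le 1 (\<lambda>z. fst (\<phi> z))" "poly_deg_le 1 (\<lambda>z. snd (\<phi> z))"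
    and p: "p \<in> Pperp n"
  shows "(\<lambda>z. p (\<phi> z)) \<in> Pperp n"
proof -
  have compose: "poly_deg_le m (\<lambda>z. q (\<phi> z))" if "poly_deg_le m q" for m q
    using poly_deg_le_compose_affine[OF that affine] by simp
  have cont_\<phi>: "continuous_on UNIV \<phi>"
    using continuous_on_Pair[OF affine[THEN continuous_on_poly_deg_le]] by simp
  have deg: "poly_deg_le n p" using p by (auto simp: Pperp_def)
  show ?thesis unfolding Pperp_def
  proof (intro CollectI conjI impI allI compose deg)
    fix r assume r: "1 \<le> n" "poly_deg_le (n - 1) r"
    have "integral ref_tri (\<lambda>z. p (\<phi> z) * r z)
        = integral ref_tri (\<lambda>z. (\<lambda>w. p w * r (\<phi> w)) (\<phi> z))"
      by (simp add: involution)
    also have "\<dots> = integral ref_tri (\<lambda>w. p w * r (\<phi> w))"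
      using continuous_on_poly_deg_le[OF deg] continuous_on_poly_deg_le[OF compose[OF r(2)]]
      by (intro integral_compose_measure_preserving preserving cont_\<phi> compact_ref_tri invariant
          continuous_intros)
    also have "\<dots> = 0"
      using p r compose[OF r(2)] by (auto simp: Pperp_def)
    finally show "integral ref_tri (\<lambda>z. p (\<phi> z) * r z) = 0" .
  qed
qed

lemma Pperp_Mop:
  assumes "p \<in> Pperp n"
  shows "Mop p \<in> Pperp n"
proof -
  have "poly_deg_le 1 (\<lambda>z. 1 + (-1) * fst z + (-1) * snd z)"
    by (intro poly_deg_le_add poly_deg_le_const poly_deg_le_cmult poly_deg_le_fst poly_deg_le_snd)
  then have "poly_deg_le 1 (\<lambda>z. fst (Mmap z))"
    by (simp add: Mmap_def)
  moreover have "poly_deg_le 1 (\<lambda>z. snd (Mmap z))"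
    using poly_deg_le_snd by (simp add: Mmap_def)
  moreover have "Mmap z \<in> ref_tri \<longleftrightarrow> z \<in> ref_tri" "Mmap (Mmap z) = z" for z
    by (auto simp: Mmap_def ref_tri_def split_def)
  ultimately have "(\<lambda>z. p (Mmap z)) \<in> Pperp n"
    using Pperp_compose_affine_involution[OF lborel_distr_Mmap _ _ _ _ assms] by blast
  then show ?thesis by (simp add: Mop_def Mmap_def case_prod_beta')
qed

lemma Pperp_Rop:
  assumes "p \<in> Pperp n"
  shows "Rop p \<in> Pperp n"
proof -
  have "prod.swap z \<in> ref_tri \<longleftrightarrow> z \<in> ref_tri" for z :: "real \<times> real"
    by (auto simp: ref_tri_def)
  then have "(\<lambda>z. p (prod.swap z)) \<in> Pperp n"
    using Pperp_compose_affine_involution[OF lborel_distr_swap _ _ _ _ assms]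
      poly_deg_le_fst poly_deg_le_snd by simp
  then show ?thesis by (simp add: Rop_def case_prod_beta' prod.swap_def)
qed

lemma Mop_Rop_eq_if_Rop_Mop_eq:
  assumes "Rop (Mop p) = p"
  shows "Mop (Rop p) = p"
proof
  fix z :: "real \<times> real"
  obtain x y where z: "z = (x, y)" by fastforce
  have "p (y, 1 - x - y) = p (1 - y - (1 - x - y), y)"
    using fun_cong[OF assms, of "(y, 1 - x - y)"] by (simp add: Rop_def Mop_def)
  then show "Mop (Rop p) z = p z"
    by (simp add: z Rop_def Mop_def)
qed

lemma Rop_Mop_fixes_symmetrization:
  "Rop (Mop (\<lambda>z. p z + Rop (Mop p) z + Mop (Rop p) z)) = (\<lambda>z. p z + Rop (Mop p) z + Mop (Rop p) z)"
  by (auto simp: Rop_def Mop_def algebra_simps)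

theorem proposition16:
  fixes n :: nat
  shows "(\<lambda>p. (\<lambda>z. p z + Rop (Mop p) z + Mop (Rop p) z)) ` Pperp n
           = {p \<in> Pperp n. Rop (Mop p) = p}"
proof (intro equalityI subsetI)
  fix q assume "q \<in> (\<lambda>p. (\<lambda>z. p z + Rop (Mop p) z + Mop (Rop p) z)) ` Pperp n"
  then obtain p where "p \<in> Pperp n" and q: "q = (\<lambda>z. p z + Rop (Mop p) z + Mop (Rop p) z)"
    by blast
  then have "q \<in> Pperp n"
    by (simp add: Pperp_add Pperp_Mop Pperp_Rop)
  then show "q \<in> {p \<in> Pperp n. Rop (Mop p) = p}"
    by (simp add: q Rop_Mop_fixes_symmetrization)
next
  fix p assume "p \<in> {p \<in> Pperp n. Rop (Mop p) = p}"
  then have p: "p \<in> Pperp n" and RM: "Rop (Mop p) = p" and MR: "Mop (Rop p) = p"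
    using Mop_Rop_eq_if_Rop_Mop_eq by auto
  define r where "r = (\<lambda>z. 1/3 * p z)"
  have "r \<in> Pperp n" unfolding r_def by (rule Pperp_cmult[OF p])
  moreover have "p = (\<lambda>z. r z + Rop (Mop r) z + Mop (Rop r) z)"
    using fun_cong[OF RM] fun_cong[OF MR] by (auto simp: r_def Rop_def Mop_def case_prod_beta)
  ultimately show "p \<in> (\<lambda>p. (\<lambda>z. p z + Rop (Mop p) z + Mop (Rop p) z)) ` Pperp n"
    by blast
qed

end
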